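(* Let $\tau$, $\phi$ be as follows: $\tau:\mathbb{F}_p((t))^d\to\mathbb{F}_p((t))^d$, $(f_1,\dots,f_d)\mapsto(tf_1,\dots,tf_d)$, and $\phi:\mathbb{F}_p((t))\to\mathrm{Aut}(\mathbb{F}_p((t))^d)$ a continuous homomorphism with $\phi(tf)=\tau\circ\phi(f)\circ\tau^{-1}$ for all $f$, such that the block matrix of $\phi(f)$ is lower triangular ($\phi(f)_{i,j}=0$ for $j>i$) for every $f$. Let $\mathcal{A}$ be the subalgebra of $\mathrm{End}(\mathbb{F}_p((t))^d)$ generated by $\{\phi(t^r)-\mathrm{Id}:r\in\mathbb{Z}\}$, and suppose there is $N\in\mathbb{N}$ with $\mathcal{A}^N=\{0\}$. Then there is $\xi\in\mathbb{F}_p((t))^d\setminus\{0\}$ with $\phi(t^n)(\xi)=\xi$ for every $n\in\mathbb{Z}$.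
   Context: $\mathcal{A}^N=\{a_1\cdots a_N: a_1,\dots,a_N\in\mathcal{A}\}$. $\mathrm{Aut}(\mathbb{F}_p((t))^d)$ has the Braconnier topology; $\mathrm{End}$ denotes continuous additive endomorphisms. For $n\in\mathbb{Z}$, $\mathbb{V}_n=\{(a_1t^n,\dots,a_dt^n):a_r\in\mathbb{F}_p\}$, $\pi_n$ the projection onto $\mathbb{V}_n$ taking $t^n$-coefficients, and $A_{i,j}=\pi_i\circ A|_{\mathbb{V}_j}$. *)

theory Defs
  imports "HOL-Analysis.Analysis" "HOL-Computational_Algebra.Formal_Laurent_Series"
begin

text \<open>The field F_p is modelled by a finite field type 'a with prime cardinality p.
  F_p((t)) is 'a fls; F_p((t))^d is 'd \<Rightarrow> 'a fls for a finite index type 'd.\<close>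

definition adic_ball :: "'a::field fls \<Rightarrow> int \<Rightarrow> 'a fls set" where
  "adic_ball x n = {y. y = x \<or> fls_subdegree (y - x) \<ge> n}"

definition tadic :: "'a::field fls topology" where
  "tadic = topology (\<lambda>S. \<forall>x\<in>S. \<exists>n. adic_ball x n \<subseteq> S)"

definition Vtop :: "('d::finite \<Rightarrow> 'a::field fls) topology" where
  "Vtop = product_topology (\<lambda>_. tadic) UNIV"

definition additive_map :: "(('d \<Rightarrow> 'a::field fls) \<Rightarrow> ('d \<Rightarrow> 'a fls)) \<Rightarrow> bool" where
  "additive_map A \<longleftrightarrow> (\<forall>x y. A (\<lambda>r. x r + y r) = (\<lambda>r. A x r + A y r))"

definition Aut :: "(('d::finite \<Rightarrow> 'a::field fls) \<Rightarrow> ('d \<Rightarrow> 'a fls)) set" where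
  "Aut = {\<alpha>. bij \<alpha> \<and> additive_map \<alpha> \<and> continuous_map Vtop Vtop \<alpha>
              \<and> continuous_map Vtop Vtop (inv \<alpha>)}"

definition braconnier :: "(('d::finite \<Rightarrow> 'a::field fls) \<Rightarrow> ('d \<Rightarrow> 'a fls)) topology" where
  "braconnier = topology_generated_by
     ({{\<alpha>\<in>Aut. \<alpha> ` K \<subseteq> U} | K U. compactin Vtop K \<and> openin Vtop U}
      \<union> {{\<alpha>\<in>Aut. inv \<alpha> ` K \<subseteq> U} | K U. compactin Vtop K \<and> openin Vtop U})"

definition tau :: "('d \<Rightarrow> 'a::field fls) \<Rightarrow> ('d \<Rightarrow> 'a fls)" where
  "tau v = (\<lambda>r. fls_X * v r)"

definition Vsub :: "int \<Rightarrow> ('d \<Rightarrow> 'a::field fls) set" where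
  "Vsub n = {v. \<exists>a::'d \<Rightarrow> 'a. v = (\<lambda>r. fls_const (a r) * fls_X_intpow n)}"

definition proj :: "int \<Rightarrow> ('d \<Rightarrow> 'a::field fls) \<Rightarrow> ('d \<Rightarrow> 'a fls)" where
  "proj n v = (\<lambda>r. fls_const (fls_nth (v r) n) * fls_X_intpow n)"

definition block :: "(('d \<Rightarrow> 'a::field fls) \<Rightarrow> ('d \<Rightarrow> 'a fls)) \<Rightarrow> int \<Rightarrow> int
                      \<Rightarrow> ('d \<Rightarrow> 'a fls) \<Rightarrow> ('d \<Rightarrow> 'a fls)" where
  "block A i j = restrict (\<lambda>x. proj i (A x)) (Vsub j)"

text \<open>The (non-unital) F_p-subalgebra of End generated by a set of maps.\<close>
inductive_set gen_alg :: "(('d \<Rightarrow> 'a::field fls) \<Rightarrow> ('d \<Rightarrow> 'a fls)) set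
     \<Rightarrow> (('d \<Rightarrow> 'a fls) \<Rightarrow> ('d \<Rightarrow> 'a fls)) set" for G where
  gen: "g \<in> G \<Longrightarrow> g \<in> gen_alg G"
| zero: "(\<lambda>v r. 0) \<in> gen_alg G"
| add: "a \<in> gen_alg G \<Longrightarrow> b \<in> gen_alg G \<Longrightarrow> (\<lambda>v r. a v r + b v r) \<in> gen_alg G"
| smult: "a \<in> gen_alg G \<Longrightarrow> (\<lambda>v r. fls_const c * a v r) \<in> gen_alg G"
| comp: "a \<in> gen_alg G \<Longrightarrow> b \<in> gen_alg G \<Longrightarrow> a \<circ> b \<in> gen_alg G"

definition alg_pow :: "(('d \<Rightarrow> 'a::field fls) \<Rightarrow> ('d \<Rightarrow> 'a fls)) set \<Rightarrow> nat
     \<Rightarrow> (('d \<Rightarrow> 'a fls) \<Rightarrow> ('d \<Rightarrow> 'a fls)) set" where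
  "alg_pow A N = {foldr (\<circ>) as id | as. length as = N \<and> set as \<subseteq> A}"

end

theory Submission
  imports Defs
begin

text \<open>Take the least m with \<open>\<A>\<^sup>m = 0\<close>; some product
  P of m - 1 elements of \<open>\<A>\<close> is nonzero, say \<open>P v \<noteq> 0\<close>. Then \<open>\<xi> = P v\<close> is killed by every
  element of \<open>\<A>\<close>, in particular by each \<open>\<phi>(t\<^sup>n) - Id\<close>, so \<open>\<xi>\<close> is a common fixed vector.\<close>

lemma alg_pow_0 [simp]: "alg_pow A 0 = {id}"
  unfolding alg_pow_def by auto

lemma alg_pow_Suc_comp:
  assumes "a \<in> A" and "P \<in> alg_pow A n"
  shows "a \<circ> P \<in> alg_pow A (Suc n)"
proof -
  obtain as where "P = foldr (\<circ>) as id" "length as = n" "set as \<subseteq> A"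
    using assms(2) unfolding alg_pow_def by auto
  then show ?thesis
    using assms(1) unfolding alg_pow_def by (intro CollectI exI[of _ "a # as"]) auto
qed

lemma id_neq_zero_map: "(id :: ('d \<Rightarrow> 'a::field fls) \<Rightarrow> _) \<noteq> (\<lambda>_ _. 0)"
proof
  assume "(id :: ('d \<Rightarrow> 'a fls) \<Rightarrow> _) = (\<lambda>_ _. 0)"
  then have "id (\<lambda>_::'d. 1::'a fls) = (\<lambda>_. 0)" by metis
  then show False by (simp add: fun_eq_iff)
qed

lemma nilpotent_common_null_vector:
  fixes A :: "(('d \<Rightarrow> 'a::field fls) \<Rightarrow> ('d \<Rightarrow> 'a fls)) set"
  assumes "alg_pow A N \<subseteq> {\<lambda>_ _. 0}"
  shows "\<exists>\<xi>. \<xi> \<noteq> (\<lambda>_. 0) \<and> (\<forall>a\<in>A. a \<xi> = (\<lambda>_. 0))"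
proof -
  define m where "m = (LEAST m. alg_pow A m \<subseteq> {\<lambda>_ _. 0})"
  have m_null: "alg_pow A m \<subseteq> {\<lambda>_ _. 0}"
    unfolding m_def using assms by (rule LeastI)
  have "m \<noteq> 0"
  proof
    assume "m = 0"
    with m_null have "(id :: ('d \<Rightarrow> 'a fls) \<Rightarrow> _) = (\<lambda>_ _. 0)" by auto
    with id_neq_zero_map show False by blast
  qed
  have "\<not> alg_pow A (m - 1) \<subseteq> {\<lambda>_ _. 0}"
  proof
    assume "alg_pow A (m - 1) \<subseteq> {\<lambda>_ _. 0}"
    then have "m \<le> m - 1" unfolding m_def by (rule Least_le)
    with \<open>m \<noteq> 0\<close> show False by simp
  qed
  then obtain P where P: "P \<in> alg_pow A (m - 1)" "P \<noteq> (\<lambda>_ _. 0)" by auto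
  then obtain v where v: "P v \<noteq> (\<lambda>_. 0)" by fastforce
  have "a (P v) = (\<lambda>_. 0)" if "a \<in> A" for a
  proof -
    have "a \<circ> P \<in> alg_pow A m"
      using alg_pow_Suc_comp[OF that P(1)] \<open>m \<noteq> 0\<close> by simp
    with m_null have "a \<circ> P = (\<lambda>_ _. 0)" by blast
    then show ?thesis by (metis comp_apply)
  qed
  with v show ?thesis by blast
qed

theorem mainTheorem16:
  fixes \<phi> :: "'a::{field,finite} fls \<Rightarrow> (('d::finite \<Rightarrow> 'a fls) \<Rightarrow> ('d \<Rightarrow> 'a fls))"
    and N :: nat
  assumes p_prime: "prime CARD('a)"
    and into_Aut: "\<And>f. \<phi> f \<in> Aut"
    and hom: "\<And>f g. \<phi> (f + g) = \<phi> f \<circ> \<phi> g"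
    and cont: "continuous_map tadic braconnier \<phi>"
    and conj: "\<And>f. \<phi> (fls_X * f) = tau \<circ> \<phi> f \<circ> inv tau"
    and lower: "\<And>f i j. j > i \<Longrightarrow> \<forall>x\<in>Vsub j. block (\<phi> f) i j x = (\<lambda>_. 0)"
    and nilp: "alg_pow (gen_alg {(\<lambda>v r. \<phi> (fls_X_intpow k) v r - v r) | k. True}) N
               = {\<lambda>_ _. 0}"
  shows "\<exists>\<xi>::'d \<Rightarrow> 'a fls. \<xi> \<noteq> (\<lambda>_. 0) \<and> (\<forall>n::int. \<phi> (fls_X_intpow n) \<xi> = \<xi>)"
proof -
  let ?\<A> = "gen_alg {(\<lambda>v r. \<phi> (fls_X_intpow k) v r - v r) | k. True}"
  obtain \<xi> where \<xi>: "\<xi> \<noteq> (\<lambda>_. 0)" and null: "\<forall>a\<in>?\<A>. a \<xi> = (\<lambda>_. 0)"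
    using nilpotent_common_null_vector[of ?\<A> N] nilp by auto
  have "\<phi> (fls_X_intpow n) \<xi> = \<xi>" for n
  proof -
    have "(\<lambda>v r. \<phi> (fls_X_intpow n) v r - v r) \<in> ?\<A>"
      by (rule gen_alg.gen) blast
    with null have "(\<lambda>r. \<phi> (fls_X_intpow n) \<xi> r - \<xi> r) = (\<lambda>_. 0)" by fastforce
    then show ?thesis by (simp add: fun_eq_iff)
  qed
  with \<xi> show ?thesis by blast
qed

end
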